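(* Let $a>b\geq c>d>0$ be real numbers and define $f:\mathbb{R}\to\mathbb{R}$ by $$f(x)=\frac{a^x-b^x}{c^x-d^x}\quad (x\neq 0),\qquad f(0)=\frac{\ln(a/b)}{\ln(c/d)}.$$ Then $f$ is strictly convex on $\mathbb{R}$.
   Context: The value $f(0)$ is the continuous extension of $\frac{a^x-b^x}{c^x-d^x}$ at $x=0$. *)

theory Defs
  imports "HOL-Analysis.Analysis"
begin

definition strict_convex_on :: "real set \<Rightarrow> (real \<Rightarrow> real) \<Rightarrow> bool" where
  "strict_convex_on S f \<longleftrightarrow> convex S \<and>
     (\<forall>x\<in>S. \<forall>y\<in>S. \<forall>u::real. x \<noteq> y \<and> 0 < u \<and> u < 1 \<longrightarrow>
        f (u * x + (1 - u) * y) < u * f x + (1 - u) * f y)"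

definition ratio_fun :: "real \<Rightarrow> real \<Rightarrow> real \<Rightarrow> real \<Rightarrow> real \<Rightarrow> real" where
  "ratio_fun a b c d x =
     (if x = 0 then ln (a / b) / ln (c / d)
      else (a powr x - b powr x) / (c powr x - d powr x))"

end

theory Submission
  imports Defs "HOL-Real_Asymp.Real_Asymp"
begin

(* With rho = ln (a/b) > 0, sigma = ln (c/d) > 0 and kappa = ln (b/c) >= 0,
     f x = exp (kappa x) * rho E (rho x) * B (sigma x) / sigma,
   where E y = (e^y - 1) / y and B y = y e^y / (e^y - 1), both extended by 1 at 0.
   All three factors are positive and nondecreasing and the first is convex. E and B are strictly
   convex: their second derivatives ((y^2 - 2y + 2) e^y - 2) / y^3 and
   e^y ((y - 2) e^y + y + 2) / (e^y - 1)^3 are positive, since each numerator vanishes at 0 and is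
   strictly increasing, like its denominator. Finally, by Chebyshev's inequality for similarly ordered
   functions, a product of positive nondecreasing convex functions one of which is strictly convex
   is strictly convex. *)

lemma strict_convex_onD:
  assumes "strict_convex_on S f" "x \<in> S" "y \<in> S" "x \<noteq> y" "0 < u" "u < 1"
  shows "f (u * x + (1 - u) * y) < u * f x + (1 - u) * f y"
  using assms by (simp add: strict_convex_on_def)

lemma strict_convex_on_imp_convex_on:
  assumes "strict_convex_on S f"
  shows "convex_on S f"
proof (rule convex_onI)
  show "convex S"
    using assms by (simp add: strict_convex_on_def)
  fix t x y :: real assume "0 < t" "t < 1" "x \<in> S" "y \<in> S"
  then show "f ((1 - t) *\<^sub>R x + t *\<^sub>R y) \<le> (1 - t) * f x + t * f y"
    using strict_convex_onD[OF assms, of x y "1 - t"] by (cases "x = y") (auto simp: algebra_simps)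
qed

lemma strict_convex_on_realI:
  assumes "connected A"
    and deriv: "\<And>x. x \<in> A \<Longrightarrow> (f has_real_derivative f' x) (at x)"
    and f'_mono: "strict_mono_on A f'"
  shows "strict_convex_on A f"
proof -
  have chord: "f (u * x + (1 - u) * y) < u * f x + (1 - u) * f y"
    if xy: "x \<in> A" "y \<in> A" "x < y" and u: "0 < u" "u < 1" for x y u :: real
  proof -
    define z where "z = u * x + (1 - u) * y"
    have z_x: "z - x = (1 - u) * (y - x)" and y_z: "y - z = u * (y - x)"
      by (simp_all add: z_def algebra_simps)
    then have "x < z" "z < y"
      using xy u by (metis diff_gt_0_iff_gt mult_pos_pos)+
    have "{x..y} \<subseteq> A"
      using \<open>connected A\<close> xy connected_contains_Icc by blast
    then have deriv_xy: "(f has_real_derivative f' t) (at t)" if "x \<le> t" "t \<le> y" for t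
      using deriv that by auto
    obtain p where p: "x < p" "p < z" "f z - f x = (z - x) * f' p"
      using MVT2[OF \<open>x < z\<close>, of f f'] deriv_xy \<open>z < y\<close> by auto
    obtain q where q: "z < q" "q < y" "f y - f z = (y - z) * f' q"
      using MVT2[OF \<open>z < y\<close>, of f f'] deriv_xy \<open>x < z\<close> by auto
    have "f' p < f' q"
      using p q \<open>{x..y} \<subseteq> A\<close> by (intro strict_mono_onD[OF f'_mono]) auto
    have "u * f x + (1 - u) * f y - f z = (1 - u) * (f y - f z) - u * (f z - f x)"
      by (simp add: algebra_simps)
    also have "\<dots> = u * (1 - u) * (y - x) * (f' q - f' p)"
      by (simp add: p(3) q(3) z_x y_z algebra_simps)
    also have "\<dots> > 0"
      using u xy \<open>f' p < f' q\<close> by simp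
    finally show ?thesis
      by (simp add: z_def)
  qed
  show ?thesis
    unfolding strict_convex_on_def
  proof (intro conjI ballI allI impI)
    show "convex A"
      using \<open>connected A\<close> is_interval_connected_1 is_interval_convex_1 by blast
    fix x y u :: real assume "x \<in> A" "y \<in> A" and xyu: "x \<noteq> y \<and> 0 < u \<and> u < 1"
    then consider "x < y" | "y < x"
      by linarith
    then show "f (u * x + (1 - u) * y) < u * f x + (1 - u) * f y"
    proof cases
      case 1 then show ?thesis
        using chord \<open>x \<in> A\<close> \<open>y \<in> A\<close> xyu by blast
    next
      case 2 then show ?thesis
        using chord[of y x "1 - u"] \<open>x \<in> A\<close> \<open>y \<in> A\<close> xyu by (simp add: algebra_simps)
    qed
  qed
qed

lemma strict_convex_on_UNIV_scale:
  assumes "strict_convex_on UNIV g" "c \<noteq> 0" "0 < k"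
  shows "strict_convex_on UNIV (\<lambda>x. k * g (c * x))"
  unfolding strict_convex_on_def
proof (intro conjI ballI allI impI)
  fix x y u :: real assume "x \<noteq> y \<and> 0 < u \<and> u < 1"
  then have "g (u * (c * x) + (1 - u) * (c * y)) < u * g (c * x) + (1 - u) * g (c * y)"
    using \<open>c \<noteq> 0\<close> by (intro strict_convex_onD[OF assms(1)]) auto
  moreover have "c * (u * x + (1 - u) * y) = u * (c * x) + (1 - u) * (c * y)"
    by (simp add: algebra_simps)
  ultimately have "k * g (c * (u * x + (1 - u) * y)) < k * (u * g (c * x) + (1 - u) * g (c * y))"
    using \<open>0 < k\<close> by simp
  also have "\<dots> = u * (k * g (c * x)) + (1 - u) * (k * g (c * y))"
    by (simp add: algebra_simps)
  finally show "k * g (c * (u * x + (1 - u) * y)) < u * (k * g (c * x)) + (1 - u) * (k * g (c * y))" .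
qed simp

lemma strict_convex_on_mult:
  fixes f g :: "real \<Rightarrow> real"
  assumes f_convex: "convex_on S f" and g_convex: "strict_convex_on S g"
    and f_mono: "mono_on S f" and g_mono: "mono_on S g"
    and f_pos: "\<And>x. x \<in> S \<Longrightarrow> 0 < f x" and g_nonneg: "\<And>x. x \<in> S \<Longrightarrow> 0 \<le> g x"
  shows "strict_convex_on S (\<lambda>x. f x * g x)"
  unfolding strict_convex_on_def
proof (intro conjI ballI allI impI)
  show "convex S"
    using convex_on_imp_convex[OF f_convex] .
  fix x y u :: real assume "x \<in> S" "y \<in> S" and xyu: "x \<noteq> y \<and> 0 < u \<and> u < 1"
  define z where "z = u * x + (1 - u) * y"
  define F where "F = u * f x + (1 - u) * f y"
  define G where "G = u * g x + (1 - u) * g y"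
  have "z \<in> S"
    using \<open>convex S\<close> \<open>x \<in> S\<close> \<open>y \<in> S\<close> xyu by (simp add: z_def convex_def)
  have "f z \<le> F"
    using convex_onD[OF f_convex, of "1 - u" x y] \<open>x \<in> S\<close> \<open>y \<in> S\<close> xyu
    by (simp add: z_def F_def)
  have "g z < G"
    using g_convex \<open>x \<in> S\<close> \<open>y \<in> S\<close> xyu by (simp add: strict_convex_on_def z_def G_def)
  have "0 \<le> (f x - f y) * (g x - g y)"
    using \<open>x \<in> S\<close> \<open>y \<in> S\<close> mono_onD[OF f_mono] mono_onD[OF g_mono]
    by (cases "x \<le> y") (auto intro: mult_nonpos_nonpos)
  then have "F * G \<le> u * (f x * g x) + (1 - u) * (f y * g y)"
    using xyu mult_nonneg_nonneg[of "u * (1 - u)" "(f x - f y) * (g x - g y)"]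
    by (simp add: F_def G_def algebra_simps)
  have "f z * g z \<le> F * g z"
    using \<open>f z \<le> F\<close> g_nonneg[OF \<open>z \<in> S\<close>] by (rule mult_right_mono)
  also have "\<dots> < F * G"
    using \<open>g z < G\<close> \<open>f z \<le> F\<close> f_pos[OF \<open>z \<in> S\<close>] by simp
  finally show "f (u * x + (1 - u) * y) * g (u * x + (1 - u) * y)
      < u * (f x * g x) + (1 - u) * (f y * g y)"
    using \<open>F * G \<le> _\<close> by (simp add: z_def)
qed

lemma mono_on_mult:
  fixes f g :: "'a::order \<Rightarrow> real"
  assumes "mono_on S f" "mono_on S g" "\<And>x. x \<in> S \<Longrightarrow> 0 \<le> f x" "\<And>x. x \<in> S \<Longrightarrow> 0 \<le> g x"
  shows "mono_on S (\<lambda>x. f x * g x)"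
  using assms by (intro mono_onI mult_mono) (auto dest: mono_onD)

lemma mono_UNIV_scale:
  fixes g :: "real \<Rightarrow> real"
  assumes "mono g" "0 \<le> c" "0 \<le> k"
  shows "mono (\<lambda>x. k * g (c * x))"
  using assms by (intro monoI mult_left_mono) (auto dest: monoD intro: mult_left_mono)

lemma convex_on_exp_mult: "convex_on UNIV (\<lambda>x. exp (k * x))"
proof (rule convex_onI)
  fix t x y :: real assume "0 < t" "t < 1"
  then show "exp (k * ((1 - t) *\<^sub>R x + t *\<^sub>R y)) \<le> (1 - t) * exp (k * x) + t * exp (k * y)"
    using convex_onD[OF exp_convex, of t "k * x" "k * y"] by (simp add: algebra_simps)
qed simp

lemma strict_mono_if_deriv_pos_except:
  fixes g g' :: "real \<Rightarrow> real"
  assumes cont: "continuous_on UNIV g"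
    and deriv: "\<And>x. x \<noteq> p \<Longrightarrow> (g has_real_derivative g' x) (at x)"
    and pos: "\<And>x. x \<noteq> p \<Longrightarrow> 0 < g' x"
  shows "strict_mono g"
proof (rule strict_monoI)
  have avoiding: "g x < g y" if "x < y" "p \<notin> {x<..<y}" for x y
    using \<open>x < y\<close>
  proof (rule DERIV_pos_imp_increasing_open)
    show "continuous_on {x..y} g"
      using cont by (rule continuous_on_subset) simp
  qed (use that deriv pos in force)
  fix x y :: real assume "x < y"
  show "g x < g y"
  proof (cases "p \<in> {x<..<y}")
    case True
    then have "g x < g p" "g p < g y"
      using avoiding by auto
    then show ?thesis by simp
  qed (use avoiding \<open>x < y\<close> in blast)
qed

lemma zero_less_divide_of_strict_mono:
  fixes g h :: "real \<Rightarrow> real"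
  assumes "strict_mono g" "strict_mono h" "g 0 = 0" "h 0 = 0" "y \<noteq> 0"
  shows "0 < g y / h y"
proof (cases "0 < y")
  case True
  then show ?thesis
    using strict_monoD[OF assms(1) True] strict_monoD[OF assms(2) True] assms(3,4) by simp
next
  case False
  then have "y < 0" using \<open>y \<noteq> 0\<close> by simp
  then show ?thesis
    using strict_monoD[OF assms(1) \<open>y < 0\<close>] strict_monoD[OF assms(2) \<open>y < 0\<close>] assms(3,4)
    by (simp add: divide_neg_neg)
qed

lemma strict_mono_power3: "strict_mono (\<lambda>y::real. y ^ 3)"
  by (rule strict_mono_if_deriv_pos_except[where p = 0 and g' = "\<lambda>y. 3 * y\<^sup>2"])
     (auto intro!: derivative_eq_intros continuous_intros)

lemma strict_mono_exp_minus_one: "strict_mono (\<lambda>y::real. exp y - 1)"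
  by (rule strict_monoI) simp

lemma add_one_less_exp:
  fixes x :: real
  assumes "x \<noteq> 0"
  shows "1 + x < exp x"
proof (cases "1 + x / 2 < 0")
  case True
  then show ?thesis
    using exp_gt_zero[of x] by linarith
next
  case False
  have "(1 + x / 2)\<^sup>2 = 1 + x + x\<^sup>2 / 4"
    by (simp add: power2_eq_square algebra_simps)
  moreover have "0 < x\<^sup>2"
    using assms by simp
  ultimately have "1 + x < (1 + x / 2)\<^sup>2"
    by linarith
  also have "\<dots> \<le> (exp (x / 2))\<^sup>2"
    using False exp_ge_add_one_self[of "x / 2"] by (intro power_mono) auto
  also have "\<dots> = exp x"
    by (simp add: power2_eq_square flip: exp_add)
  finally show ?thesis .
qed

lemma pred_mult_exp_add_one_pos:
  fixes y :: real
  assumes "y \<noteq> 0"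
  shows "0 < (y - 1) * exp y + 1"
proof -
  have "(1 - y) * exp y < exp (- y) * exp y"
    using add_one_less_exp[of "- y"] assms by simp
  then show ?thesis
    by (simp add: algebra_simps flip: exp_add)
qed

definition exprel :: "real \<Rightarrow> real" where
  "exprel y = (if y = 0 then 1 else (exp y - 1) / y)"

definition exprel_deriv :: "real \<Rightarrow> real" where
  "exprel_deriv y = (if y = 0 then 1 / 2 else ((y - 1) * exp y + 1) / y\<^sup>2)"

lemma has_real_derivative_exprel: "(exprel has_real_derivative exprel_deriv y) (at y)"
proof (cases "y = 0")
  case True
  have "((\<lambda>h::real. ((exp h - 1) / h - 1) / h) \<longlongrightarrow> 1 / 2) (at 0)"
    by real_asymp
  then have "((\<lambda>h. (exprel h - exprel 0) / (h - 0)) \<longlongrightarrow> 1 / 2) (at 0)"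
    by (rule Lim_transform_eventually) (simp add: eventually_at_filter exprel_def)
  then show ?thesis
    using True by (simp add: has_field_derivative_iff exprel_deriv_def)
next
  case False
  have "((\<lambda>y. (exp y - 1) / y) has_real_derivative exprel_deriv y) (at y)"
    using False by (auto intro!: derivative_eq_intros simp: exprel_deriv_def field_simps power2_eq_square)
  then show ?thesis
    by (rule has_field_derivative_transform_within_open[where S = "- {0}"])
       (auto simp: exprel_def False)
qed

lemma strict_mono_exprel_deriv: "strict_mono exprel_deriv"
proof -
  define N where "N y = (y\<^sup>2 - 2 * y + 2) * exp y - 2" for y :: real
  have deriv: "(exprel_deriv has_real_derivative N y / y ^ 3) (at y)" if "y \<noteq> 0" for y
  proof -
    have "((\<lambda>y. ((y - 1) * exp y + 1) / y\<^sup>2) has_real_derivative N y / y ^ 3) (at y)"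
      using that by (auto intro!: derivative_eq_intros
          simp: N_def field_simps power2_eq_square power3_eq_cube)
    then show ?thesis
      by (rule has_field_derivative_transform_within_open[where S = "- {0}"])
         (auto simp: exprel_deriv_def that)
  qed
  have "((\<lambda>h::real. ((h - 1) * exp h + 1) / h\<^sup>2) \<longlongrightarrow> 1 / 2) (at 0)"
    by real_asymp
  then have "(exprel_deriv \<longlongrightarrow> 1 / 2) (at 0)"
    by (rule Lim_transform_eventually) (simp add: eventually_at_filter exprel_deriv_def)
  then have "isCont exprel_deriv y" for y
    using deriv[THEN DERIV_isCont, of y] by (cases "y = 0") (simp_all add: isCont_def exprel_deriv_def)
  moreover have "strict_mono N"
  proof (rule strict_mono_if_deriv_pos_except[where p = 0])
    show "continuous_on UNIV N"
      unfolding N_def by (intro continuous_intros)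
    fix y :: real assume "y \<noteq> 0"
    show "(N has_real_derivative y\<^sup>2 * exp y) (at y)"
      unfolding N_def by (auto intro!: derivative_eq_intros simp: algebra_simps power2_eq_square)
    show "0 < y\<^sup>2 * exp y"
      using \<open>y \<noteq> 0\<close> by simp
  qed
  then have "0 < N y / y ^ 3" if "y \<noteq> 0" for y
    using that by (intro zero_less_divide_of_strict_mono[OF \<open>strict_mono N\<close> strict_mono_power3])
                  (simp_all add: N_def)
  ultimately show ?thesis
    by (intro strict_mono_if_deriv_pos_except[where p = 0, OF _ deriv])
       (simp_all add: continuous_at_imp_continuous_on)
qed

lemma exprel_pos: "0 < exprel y"
  using zero_less_divide_of_strict_mono[OF strict_mono_exp_minus_one strict_mono_id, of y]
  by (simp add: exprel_def)

lemma strict_mono_exprel: "strict_mono exprel"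
proof (rule strict_mono_if_deriv_pos_except[where p = 0, OF _ has_real_derivative_exprel])
  show "continuous_on UNIV exprel"
    using has_real_derivative_exprel DERIV_isCont by (blast intro: continuous_at_imp_continuous_on)
  fix y :: real assume "y \<noteq> 0"
  then show "0 < exprel_deriv y"
    using pred_mult_exp_add_one_pos[of y] by (simp add: exprel_deriv_def)
qed

lemma strict_convex_on_exprel: "strict_convex_on UNIV exprel"
  by (rule strict_convex_on_realI[OF connected_UNIV has_real_derivative_exprel strict_mono_exprel_deriv])

(* y / (1 - e^-y): the Bernoulli generating function t / (e^t - 1) at t = -y *)
definition bernoulli_gf_neg :: "real \<Rightarrow> real" where
  "bernoulli_gf_neg y = (if y = 0 then 1 else y * exp y / (exp y - 1))"

definition bernoulli_gf_neg_deriv :: "real \<Rightarrow> real" where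
  "bernoulli_gf_neg_deriv y =
     (if y = 0 then 1 / 2 else exp y * (exp y - 1 - y) / (exp y - 1)\<^sup>2)"

lemma has_real_derivative_bernoulli_gf_neg:
  "(bernoulli_gf_neg has_real_derivative bernoulli_gf_neg_deriv y) (at y)"
proof (cases "y = 0")
  case True
  have "((\<lambda>h::real. (h * exp h / (exp h - 1) - 1) / h) \<longlongrightarrow> 1 / 2) (at 0)"
    by real_asymp
  then have "((\<lambda>h. (bernoulli_gf_neg h - bernoulli_gf_neg 0) / (h - 0)) \<longlongrightarrow> 1 / 2) (at 0)"
    by (rule Lim_transform_eventually) (simp add: eventually_at_filter bernoulli_gf_neg_def)
  then show ?thesis
    using True by (simp add: has_field_derivative_iff bernoulli_gf_neg_deriv_def)
next
  case False
  then have "exp y - 1 \<noteq> 0"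
    by simp
  then have "((\<lambda>y. y * exp y / (exp y - 1)) has_real_derivative bernoulli_gf_neg_deriv y) (at y)"
    using False by (auto intro!: derivative_eq_intros
        simp: bernoulli_gf_neg_deriv_def field_simps power2_eq_square)
  then show ?thesis
    by (rule has_field_derivative_transform_within_open[where S = "- {0}"])
       (auto simp: bernoulli_gf_neg_def False)
qed

lemma strict_mono_bernoulli_gf_neg_deriv: "strict_mono bernoulli_gf_neg_deriv"
proof -
  define M where "M y = (y - 2) * exp y + y + 2" for y :: real
  have deriv: "(bernoulli_gf_neg_deriv has_real_derivative exp y * (M y / (exp y - 1) ^ 3)) (at y)"
    if "y \<noteq> 0" for y
  proof -
    from that have "exp y - 1 \<noteq> 0"
      by simp
    then have "((\<lambda>y. exp y * (exp y - 1 - y) / (exp y - 1)\<^sup>2)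
        has_real_derivative exp y * (M y / (exp y - 1) ^ 3)) (at y)"
      by (auto intro!: derivative_eq_intros simp: M_def divide_simps) algebra
    then show ?thesis
      by (rule has_field_derivative_transform_within_open[where S = "- {0}"])
         (auto simp: bernoulli_gf_neg_deriv_def that)
  qed
  have "((\<lambda>h::real. exp h * (exp h - 1 - h) / (exp h - 1)\<^sup>2) \<longlongrightarrow> 1 / 2) (at 0)"
    by real_asymp
  then have "(bernoulli_gf_neg_deriv \<longlongrightarrow> 1 / 2) (at 0)"
    by (rule Lim_transform_eventually) (simp add: eventually_at_filter bernoulli_gf_neg_deriv_def)
  then have "isCont bernoulli_gf_neg_deriv y" for y
    using deriv[THEN DERIV_isCont, of y]
    by (cases "y = 0") (simp_all add: isCont_def bernoulli_gf_neg_deriv_def)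
  moreover have "strict_mono M"
  proof (rule strict_mono_if_deriv_pos_except[where p = 0])
    show "continuous_on UNIV M"
      unfolding M_def by (intro continuous_intros)
    fix y :: real assume "y \<noteq> 0"
    show "(M has_real_derivative (y - 1) * exp y + 1) (at y)"
      unfolding M_def by (auto intro!: derivative_eq_intros simp: algebra_simps)
    show "0 < (y - 1) * exp y + 1"
      using pred_mult_exp_add_one_pos[OF \<open>y \<noteq> 0\<close>] .
  qed
  moreover have "strict_mono (\<lambda>y::real. (exp y - 1) ^ 3)"
    by (rule strict_mono_compose[OF strict_mono_power3 strict_mono_exp_minus_one])
  ultimately have "0 < exp y * (M y / (exp y - 1) ^ 3)" if "y \<noteq> 0" for y
    using that zero_less_divide_of_strict_mono[of M "\<lambda>y. (exp y - 1) ^ 3" y]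
    by (intro mult_pos_pos exp_gt_zero) (simp add: M_def)
  with \<open>\<And>y. isCont bernoulli_gf_neg_deriv y\<close> show ?thesis
    by (intro strict_mono_if_deriv_pos_except[where p = 0, OF _ deriv])
       (simp_all add: continuous_at_imp_continuous_on)
qed

lemma bernoulli_gf_neg_pos: "0 < bernoulli_gf_neg y"
proof (cases "y = 0")
  case False
  then have "0 < y / (exp y - 1)"
    using zero_less_divide_of_strict_mono[OF strict_mono_id strict_mono_exp_minus_one, of y] by simp
  then have "0 < exp y * (y / (exp y - 1))"
    by (rule mult_pos_pos[OF exp_gt_zero])
  then show ?thesis
    by (simp add: bernoulli_gf_neg_def False ac_simps)
qed (simp add: bernoulli_gf_neg_def)

lemma strict_mono_bernoulli_gf_neg: "strict_mono bernoulli_gf_neg"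
proof (rule strict_mono_if_deriv_pos_except[where p = 0, OF _ has_real_derivative_bernoulli_gf_neg])
  show "continuous_on UNIV bernoulli_gf_neg"
    using has_real_derivative_bernoulli_gf_neg DERIV_isCont
    by (blast intro: continuous_at_imp_continuous_on)
  fix y :: real assume "y \<noteq> 0"
  then show "0 < bernoulli_gf_neg_deriv y"
    using add_one_less_exp[of y] by (simp add: bernoulli_gf_neg_deriv_def)
qed

lemma strict_convex_on_bernoulli_gf_neg: "strict_convex_on UNIV bernoulli_gf_neg"
  by (rule strict_convex_on_realI[OF connected_UNIV has_real_derivative_bernoulli_gf_neg
        strict_mono_bernoulli_gf_neg_deriv])

lemma exp_ln_divide_mult:
  fixes a b x :: real
  assumes "0 < a" "0 < b"
  shows "exp (ln (a / b) * x) = a powr x / b powr x"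
  using assms by (simp add: powr_def[of "a / b"] powr_divide[symmetric] mult.commute)

lemma ratio_fun_eq_product:
  fixes a b c d x :: real
  assumes "0 < a" "0 < b" "0 < c" "0 < d" "a \<noteq> b" "c \<noteq> d"
  shows "ratio_fun a b c d x =
    exp (ln (b / c) * x) * (ln (a / b) * exprel (ln (a / b) * x)
      * (1 / ln (c / d) * bernoulli_gf_neg (ln (c / d) * x)))"
proof (cases "x = 0")
  case True
  then show ?thesis
    by (simp add: ratio_fun_def exprel_def bernoulli_gf_neg_def)
next
  case False
  have "ln (a / b) \<noteq> 0" "ln (c / d) \<noteq> 0"
    using assms by simp_all
  moreover have "c powr x \<noteq> d powr x"
    using assms False by (simp add: powr_def)
  ultimately show ?thesis
    using assms False
    by (simp add: ratio_fun_def exprel_def bernoulli_gf_neg_def exp_ln_divide_mult) (simp add: field_simps)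
qed

theorem theorem2p2:
  fixes a b c d :: real
  assumes "a > b" and "b \<ge> c" and "c > d" and "d > 0"
  shows "strict_convex_on UNIV (ratio_fun a b c d)"
proof -
  define \<rho> \<sigma> \<kappa> where "\<rho> = ln (a / b)" and "\<sigma> = ln (c / d)" and "\<kappa> = ln (b / c)"
  have "0 < \<rho>" "0 < \<sigma>" "0 \<le> \<kappa>"
    using assms by (simp_all add: \<rho>_def \<sigma>_def \<kappa>_def)
  define P Q R where "P x = \<rho> * exprel (\<rho> * x)" and "Q x = 1 / \<sigma> * bernoulli_gf_neg (\<sigma> * x)"
    and "R x = exp (\<kappa> * x)" for x
  have ratio_fun: "ratio_fun a b c d = (\<lambda>x. R x * (P x * Q x))"
    using assms by (intro ext) (simp add: ratio_fun_eq_product P_def Q_def R_def \<rho>_def \<sigma>_def \<kappa>_def)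
  have "strict_convex_on UNIV P" "strict_convex_on UNIV Q"
    using \<open>0 < \<rho>\<close> \<open>0 < \<sigma>\<close> unfolding P_def Q_def
    by (intro strict_convex_on_UNIV_scale strict_convex_on_exprel strict_convex_on_bernoulli_gf_neg; simp)+
  moreover have "mono P" "mono Q"
    using \<open>0 < \<rho>\<close> \<open>0 < \<sigma>\<close> unfolding P_def Q_def
    by (intro mono_UNIV_scale strict_mono_mono strict_mono_exprel strict_mono_bernoulli_gf_neg; simp)+
  moreover have "mono R"
    using \<open>0 \<le> \<kappa>\<close> unfolding R_def by (intro monoI) (simp add: mult_left_mono)
  moreover have "convex_on UNIV R"
    unfolding R_def by (rule convex_on_exp_mult)
  moreover have "0 < P x" "0 < Q x" "0 < R x" for x
    using \<open>0 < \<rho>\<close> \<open>0 < \<sigma>\<close> exprel_pos bernoulli_gf_neg_pos by (simp_all add: P_def Q_def R_def)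
  ultimately have "strict_convex_on UNIV (\<lambda>x. P x * Q x)" "mono (\<lambda>x. P x * Q x)"
    by (auto intro!: strict_convex_on_mult strict_convex_on_imp_convex_on mono_on_mult less_imp_le)
  with \<open>convex_on UNIV R\<close> \<open>mono R\<close> \<open>\<And>x. 0 < R x\<close> \<open>\<And>x. 0 < P x\<close> \<open>\<And>x. 0 < Q x\<close>
  have "strict_convex_on UNIV (\<lambda>x. R x * (P x * Q x))"
    by (intro strict_convex_on_mult[of UNIV R "\<lambda>x. P x * Q x"]) (auto intro: less_imp_le)
  then show ?thesis
    unfolding ratio_fun .
qed

end
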